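(* Let $G$ be a signed digraph with $n$ vertices and without negative cycles, and let $f$ be a Boolean network on $G$. The following are equivalent: (1) $f$ has a unique fixed point; (2) $f$ has a synchronizing word of length $n$; (3) $f$ is synchronizing.
   Context: A signed digraph on $V$ is $(V,E)$ with $E\subseteq V\times V\times\{-1,1\}$; cycles have no repeated vertices (a loop is a cycle) and their sign is the product of arc signs. A Boolean network (BN) is $f:\{0,1\}^V\to\{0,1\}^V$; its signed interaction digraph has a positive (negative) arc from $j$ to $i$ iff for some $x$ with $x_j=0$, $f_i(x+e_j)-f_i(x)$ is positive (negative). A BN on $G$ is one whose signed interaction digraph is $G$. $f^i(x)$ is $x$ with $x_i$ replaced by $f_i(x)$; $f^{i_1\cdots i_\ell}=f^{i_\ell}\circ\cdots\circ f^{i_1}$; $w$ is synchronizing if $f^w$ is constant; $f$ is synchronizing if it has a synchronizing word. *)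

theory Defs
  imports Main
begin

text \<open>Vertex set V = the finite type 'v; configurations x in {0,1}^V are 'v => bool
  (True = 1, False = 0). A signed digraph is a set of arcs (j, i, s) with s in {-1,1}.\<close>

type_synonym 'v sdigraph = "('v \<times> 'v \<times> int) set"

definition signed_digraph :: "'v sdigraph \<Rightarrow> bool" where
  "signed_digraph E \<longleftrightarrow> (\<forall>(j, i, s) \<in> E. s = -1 \<or> s = 1)"

definition interaction_digraph :: "(('v \<Rightarrow> bool) \<Rightarrow> ('v \<Rightarrow> bool)) \<Rightarrow> 'v sdigraph" where
  "interaction_digraph f =
     {(j, i, 1) | j i. \<exists>x. \<not> x j \<and> \<not> f x i \<and> f (x(j := True)) i}
   \<union> {(j, i, -1) | j i. \<exists>x. \<not> x j \<and> f x i \<and> \<not> f (x(j := True)) i}"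

definition is_cycle :: "'v sdigraph \<Rightarrow> 'v list \<Rightarrow> int list \<Rightarrow> bool" where
  "is_cycle E vs ss \<longleftrightarrow> vs \<noteq> [] \<and> distinct vs \<and> length ss = length vs \<and>
     (\<forall>t < length vs. (vs ! t, vs ! ((t + 1) mod length vs), ss ! t) \<in> E)"

definition no_negative_cycle :: "'v sdigraph \<Rightarrow> bool" where
  "no_negative_cycle E \<longleftrightarrow> (\<forall>vs ss. is_cycle E vs ss \<longrightarrow> prod_list ss \<noteq> -1)"

text \<open>f^i(x): x with x_i replaced by f_i(x).  f^{i_1...i_l} = f^{i_l} o ... o f^{i_1}.\<close>
definition async_update :: "(('v \<Rightarrow> bool) \<Rightarrow> ('v \<Rightarrow> bool)) \<Rightarrow> 'v \<Rightarrow> ('v \<Rightarrow> bool) \<Rightarrow> ('v \<Rightarrow> bool)" where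
  "async_update f i x = x(i := f x i)"

definition word_update :: "(('v \<Rightarrow> bool) \<Rightarrow> ('v \<Rightarrow> bool)) \<Rightarrow> 'v list \<Rightarrow> ('v \<Rightarrow> bool) \<Rightarrow> ('v \<Rightarrow> bool)" where
  "word_update f w x = fold (async_update f) w x"

definition synchronizing_word :: "(('v \<Rightarrow> bool) \<Rightarrow> ('v \<Rightarrow> bool)) \<Rightarrow> 'v list \<Rightarrow> bool" where
  "synchronizing_word f w \<longleftrightarrow> (\<exists>c. \<forall>x. word_update f w x = c)"

definition synchronizing :: "(('v \<Rightarrow> bool) \<Rightarrow> ('v \<Rightarrow> bool)) \<Rightarrow> bool" where
  "synchronizing f \<longleftrightarrow> (\<exists>w. synchronizing_word f w)"

end

theory Submission
  imports Defs
begin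

(* Without negative cycles a network has a fixed point, and the proof gives more. Pick an
   influential vertex v (one with an out-arc) whose set of ancestors is minimal. Either v has no
   in-arcs, so f_v is constant, or the vertices reaching v by a nonempty walk form a set C that no
   arc enters from outside, in which every vertex has an in-arc, and on which the absence of
   negative cycles yields a switching \<sigma> making every arc into C positive. Then each f_i, i
   in C, is monotone with respect to the order switched by \<sigma>, so both \<sigma> and its
   complement are stable on C. Clamping a stable pattern removes influential vertices, which gives
   a fixed point by induction. If the fixed point is unique, the second alternative is impossible
   (it yields two fixed points), so some influential vertex i has a constant local function:
   updating i first and continuing with a synchronizing word of the network clamped at i gives,
   inductively, a synchronizing word without repetitions, hence of length at most n. Conversely, a
   synchronizing word fixes every fixed point, so there is at most one. *)

section \<open>Walks in signed digraphs\<close>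

(* walk E u vs ss v: vs lists the vertices of a walk from u to v, without v, and ss the signs
   of its arcs. *)
inductive walk :: "'v sdigraph \<Rightarrow> 'v \<Rightarrow> 'v list \<Rightarrow> int list \<Rightarrow> 'v \<Rightarrow> bool" for E where
  walk_Nil: "walk E u [] [] u"
| walk_Cons: "(u, w, s) \<in> E \<Longrightarrow> walk E w vs ss v \<Longrightarrow> walk E u (u # vs) (s # ss) v"

lemma walk_append:
  "walk E u vs ss v \<Longrightarrow> walk E v vs' ss' w \<Longrightarrow> walk E u (vs @ vs') (ss @ ss') w"
  by (induction rule: walk.induct) (auto intro: walk.intros)

lemma walk_Nil_iff: "walk E u [] ss v \<longleftrightarrow> u = v \<and> ss = []"
  by (auto elim: walk.cases intro: walk_Nil)

lemma walk_split:
  assumes "walk E u (xs @ y # ys) ss v"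
  shows "\<exists>ss1 ss2. ss = ss1 @ ss2 \<and> walk E u xs ss1 y \<and> walk E y (y # ys) ss2 v"
  using assms
proof (induction xs arbitrary: u ss)
  case Nil
  then have "u = y"
    by (auto elim: walk.cases)
  with Nil show ?case
    using walk_Nil by fastforce
next
  case (Cons x xs)
  then obtain w s ss' where "x = u" "ss = s # ss'" "(u, w, s) \<in> E" "walk E w (xs @ y # ys) ss' v"
    by (auto elim: walk.cases)
  with Cons.IH show ?case
    by (metis append_Cons walk_Cons)
qed

lemma walk_length: "walk E u vs ss v \<Longrightarrow> length ss = length vs"
  by (induction rule: walk.induct) auto

lemma walk_nth:
  "walk E u vs ss v \<Longrightarrow> t < length vs \<Longrightarrow> (vs ! t, (vs @ [v]) ! Suc t, ss ! t) \<in> E"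
proof (induction arbitrary: t rule: walk.induct)
  case (walk_Cons u w s vs ss v)
  then show ?case
    by (cases t) (auto elim: walk.cases)
qed simp

lemma walk_first_arc: "walk E u vs ss v \<Longrightarrow> vs \<noteq> [] \<Longrightarrow> \<exists>j s. (u, j, s) \<in> E"
  by (induction rule: walk.induct) auto

lemma walk_last_arc: "walk E u vs ss v \<Longrightarrow> vs \<noteq> [] \<Longrightarrow> \<exists>j s. (j, v, s) \<in> E"
  by (induction rule: walk.induct) (auto elim: walk.cases)

lemma walk_sign:
  assumes "signed_digraph E" "walk E u vs ss v"
  shows "prod_list ss = 1 \<or> prod_list ss = -1"
  using assms(2)
proof (induction rule: walk.induct)
  case (walk_Cons u w s vs ss v)
  then have "s = 1 \<or> s = -1"
    using assms(1) unfolding signed_digraph_def by auto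
  with walk_Cons.IH show ?case
    by auto
qed simp

lemma cycle_if_distinct_closed_walk:
  assumes "walk E u vs ss u" "vs \<noteq> []" "distinct vs"
  shows "is_cycle E vs ss"
  unfolding is_cycle_def
proof (intro conjI allI impI)
  show "length ss = length vs"
    using assms(1) by (rule walk_length)
  have "vs ! 0 = u"
    using assms(1,2) by (auto elim: walk.cases)
  fix t
  assume t: "t < length vs"
  then have "(vs ! t, (vs @ [u]) ! Suc t, ss ! t) \<in> E"
    by (rule walk_nth[OF assms(1)])
  moreover have "(vs @ [u]) ! Suc t = vs ! ((t + 1) mod length vs)"
    using t \<open>vs ! 0 = u\<close> by (cases "Suc t = length vs") (auto simp: nth_append)
  ultimately show "(vs ! t, vs ! ((t + 1) mod length vs), ss ! t) \<in> E"
    by simp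
qed (use assms in auto)

lemma negative_cycle_if_negative_closed_walk:
  assumes "signed_digraph E" "walk E u vs ss u" "prod_list ss = -1"
  shows "\<exists>vs' ss'. is_cycle E vs' ss' \<and> prod_list ss' = -1"
  using assms(2,3)
proof (induction "length vs" arbitrary: u vs ss rule: less_induct)
  case less
  show ?case
  proof (cases "distinct vs")
    case True
    have "ss \<noteq> []"
      using less.prems(2) by auto
    then have "vs \<noteq> []"
      using walk_length[OF less.prems(1)] by auto
    with True less.prems(1) have "is_cycle E vs ss"
      by (intro cycle_if_distinct_closed_walk)
    with less.prems(2) show ?thesis
      by blast
  next
    case False
    then obtain xs y ys zs where "vs = xs @ [y] @ ys @ [y] @ zs"
      using not_distinct_decomp[OF False] by blast
    then have vs: "vs = xs @ y # ys @ y # zs"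
      by simp
    obtain ss1 ss' where "ss = ss1 @ ss'" "walk E u xs ss1 y" "walk E y (y # ys @ y # zs) ss' u"
      using walk_split[of E u xs y "ys @ y # zs" ss u] less.prems(1) unfolding vs by blast
    moreover obtain ss2 ss3 where "ss' = ss2 @ ss3" "walk E y (y # ys) ss2 y" "walk E y (y # zs) ss3 u"
      using walk_split[of E y "y # ys" y zs ss' u] \<open>walk E y (y # ys @ y # zs) ss' u\<close> by auto
    ultimately have ss: "ss = ss1 @ ss2 @ ss3"
      and prefix: "walk E u xs ss1 y" and loop: "walk E y (y # ys) ss2 y"
      and suffix: "walk E y (y # zs) ss3 u"
      by simp_all
    from prefix suffix have rest: "walk E u (xs @ y # zs) (ss1 @ ss3) u"
      by (rule walk_append)
    have "prod_list ss2 = -1 \<or> prod_list (ss1 @ ss3) = -1"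
      using less.prems(2) walk_sign[OF assms(1) loop] unfolding ss by auto
    moreover have "length (y # ys) < length vs" "length (xs @ y # zs) < length vs"
      unfolding vs by simp_all
    ultimately show ?thesis
      using less.hyps loop rest by blast
  qed
qed

lemma closed_walk_positive:
  assumes "signed_digraph E" "no_negative_cycle E" "walk E u vs ss u"
  shows "prod_list ss = 1"
proof (rule ccontr)
  assume "prod_list ss \<noteq> 1"
  with walk_sign[OF assms(1,3)] have "prod_list ss = -1"
    by simp
  with negative_cycle_if_negative_closed_walk[OF assms(1,3)] assms(2) show False
    unfolding no_negative_cycle_def by blast
qed

lemma walk_sign_unique:
  assumes "signed_digraph E" "no_negative_cycle E"
    and "walk E u vs1 ss1 v" "walk E u vs2 ss2 v" "walk E v vs3 ss3 u"
  shows "prod_list ss1 = prod_list ss2"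
proof -
  have "walk E u (vs1 @ vs3) (ss1 @ ss3) u"
    using assms(3,5) by (rule walk_append)
  moreover have "walk E u (vs2 @ vs3) (ss2 @ ss3) u"
    using assms(4,5) by (rule walk_append)
  ultimately have "prod_list ss1 * prod_list ss3 = 1" "prod_list ss2 * prod_list ss3 = 1"
    using closed_walk_positive[OF assms(1,2)] by fastforce+
  with walk_sign[OF assms(1,5)] show ?thesis
    by auto
qed

section \<open>Initial components without negative cycles\<close>

lemma finite_preorder_has_minimal:
  fixes R :: "'a::finite \<Rightarrow> 'a \<Rightarrow> bool"
  assumes "S \<noteq> {}" and refl: "\<And>a. R a a" and trans: "\<And>a b c. R a b \<Longrightarrow> R b c \<Longrightarrow> R a c"
  shows "\<exists>v\<in>S. \<forall>u\<in>S. R u v \<longrightarrow> R v u"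
proof -
  obtain v where "v \<in> S" and v_min: "\<And>u. u \<in> S \<Longrightarrow> card {w. R w v} \<le> card {w. R w u}"
    using ex_has_least_nat[of "\<lambda>v. v \<in> S" _ "\<lambda>v. card {w. R w v}"] \<open>S \<noteq> {}\<close> by blast
  have "R v u" if "u \<in> S" "R u v" for u
  proof (rule ccontr)
    assume "\<not> R v u"
    have "{w. R w u} \<subseteq> {w. R w v}"
      using trans \<open>R u v\<close> by blast
    moreover have "v \<in> {w. R w v} - {w. R w u}"
      using refl \<open>\<not> R v u\<close> by simp
    ultimately have "card {w. R w u} < card {w. R w v}"
      by (intro psubset_card_mono) auto
    with v_min[OF \<open>u \<in> S\<close>] show False
      by simp
  qed
  with \<open>v \<in> S\<close> show ?thesis
    by blast
qed

(* \<sigma> is a switching of the signs making every arc into C positive. *)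
definition balanced_in_closed :: "'v sdigraph \<Rightarrow> 'v set \<Rightarrow> ('v \<Rightarrow> bool) \<Rightarrow> bool" where
  "balanced_in_closed E C \<sigma> \<longleftrightarrow>
     (\<forall>i\<in>C. (\<exists>j s. (j, i, s) \<in> E) \<and>
       (\<forall>j s. (j, i, s) \<in> E \<longrightarrow> j \<in> C \<and> (s = 1 \<longleftrightarrow> (\<sigma> j \<longleftrightarrow> \<sigma> i))))"

lemma ex_negative_walk_iff:
  assumes "signed_digraph E" "no_negative_cycle E" "walk E v vs ss u" "walk E u vs' ss' v"
  shows "(\<exists>vs ss. walk E v vs ss u \<and> prod_list ss = -1) \<longleftrightarrow> prod_list ss = -1"
  using assms(3) walk_sign_unique[OF assms(1,2) _ assms(3,4)] by metis

lemma in_arc_if_on_closed_walk: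
  assumes "walk E i vs ss v" "vs \<noteq> []" "walk E v vs' ss' i"
  shows "\<exists>j s. (j, i, s) \<in> E"
proof -
  from assms(1,3) have "walk E i (vs @ vs') (ss @ ss') i"
    by (rule walk_append)
  with \<open>vs \<noteq> []\<close> show ?thesis
    using walk_last_arc[of E i "vs @ vs'"] by simp
qed

lemma balanced_in_closed_if_initial_component:
  assumes sgn: "signed_digraph E" and nnc: "no_negative_cycle E" and "(j0, v, s0) \<in> E"
    and reach_back: "\<And>u vs ss. walk E u vs ss v \<Longrightarrow> \<exists>vs' ss'. walk E v vs' ss' u"
  shows "\<exists>C \<sigma>. C \<noteq> {} \<and> balanced_in_closed E C \<sigma>"
proof -
  define C where "C = {u. \<exists>vs ss. walk E u vs ss v \<and> vs \<noteq> []}"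
  define \<sigma> where "\<sigma> u \<longleftrightarrow> (\<exists>vs ss. walk E v vs ss u \<and> prod_list ss = -1)" for u
  have "walk E j0 [j0] [s0] v"
    using \<open>(j0, v, s0) \<in> E\<close> walk_Nil by (rule walk_Cons)
  then have "j0 \<in> C"
    unfolding C_def by blast
  moreover have "balanced_in_closed E C \<sigma>"
    unfolding balanced_in_closed_def
  proof (intro ballI conjI allI impI)
    fix i
    assume "i \<in> C"
    then obtain vs ss where i_to_v: "walk E i vs ss v" "vs \<noteq> []"
      unfolding C_def by blast
    moreover obtain vs' ss' where "walk E v vs' ss' i"
      using reach_back[OF i_to_v(1)] by blast
    ultimately show "\<exists>j s. (j, i, s) \<in> E"
      by (rule in_arc_if_on_closed_walk)
    fix j s
    assume arc: "(j, i, s) \<in> E"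
    then have j_to_v: "walk E j (j # vs) (s # ss) v"
      using i_to_v(1) by (rule walk_Cons)
    then show "j \<in> C"
      unfolding C_def by blast
    obtain vs' ss' where v_to_j: "walk E v vs' ss' j"
      using reach_back[OF j_to_v] by blast
    then have "walk E v (vs' @ [j]) (ss' @ [s]) i"
      using walk_Cons[OF arc walk_Nil] by (rule walk_append)
    then have "\<sigma> i \<longleftrightarrow> prod_list ss' * s = -1"
      unfolding \<sigma>_def using ex_negative_walk_iff[OF sgn nnc _ i_to_v(1)] by simp
    moreover have "\<sigma> j \<longleftrightarrow> prod_list ss' = -1"
      unfolding \<sigma>_def using ex_negative_walk_iff[OF sgn nnc v_to_j j_to_v] .
    moreover have "s = 1 \<or> s = -1"
      using sgn arc unfolding signed_digraph_def by auto
    ultimately show "s = 1 \<longleftrightarrow> (\<sigma> j \<longleftrightarrow> \<sigma> i)"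
      using walk_sign[OF sgn v_to_j] by (cases "s = 1"; cases "prod_list ss' = 1") auto
  qed
  ultimately show ?thesis
    by blast
qed

lemma source_or_balanced_in_closed:
  fixes E :: "('v::finite) sdigraph"
  assumes sgn: "signed_digraph E" and nnc: "no_negative_cycle E" and "E \<noteq> {}"
  shows "(\<exists>i. (\<exists>j s. (i, j, s) \<in> E) \<and> (\<forall>j s. (j, i, s) \<notin> E))
    \<or> (\<exists>C \<sigma>. C \<noteq> {} \<and> balanced_in_closed E C \<sigma>)"
proof -
  define S where "S = {u. \<exists>j s. (u, j, s) \<in> E}"
  define reach where "reach u v \<longleftrightarrow> (\<exists>vs ss. walk E u vs ss v)" for u v
  obtain a b c where "(a, b, c) \<in> E"
    using \<open>E \<noteq> {}\<close> by (metis all_not_in_conv prod_cases3)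
  then have "S \<noteq> {}"
    unfolding S_def by blast
  moreover have "reach u u" for u
    unfolding reach_def by (blast intro: walk_Nil)
  moreover have "reach u w" if "reach u v" "reach v w" for u v w
    using that unfolding reach_def by (blast intro: walk_append)
  ultimately obtain v where "v \<in> S" and v_min: "\<And>u. u \<in> S \<Longrightarrow> reach u v \<Longrightarrow> reach v u"
    using finite_preorder_has_minimal[of S reach] by blast
  show ?thesis
  proof (cases "\<exists>j s. (j, v, s) \<in> E")
    case False
    with \<open>v \<in> S\<close> show ?thesis
      unfolding S_def by blast
  next
    case True
    then obtain j0 s0 where "(j0, v, s0) \<in> E"
      by blast
    moreover have "\<exists>vs' ss'. walk E v vs' ss' u" if "walk E u vs ss v" for u vs ss
    proof (cases "vs = []")
      case True
      with that show ?thesis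
        by (auto simp: walk_Nil_iff intro: walk_Nil)
    next
      case False
      with that have "u \<in> S" "reach u v"
        using walk_first_arc[of E u vs ss v] unfolding S_def reach_def by auto
      then show ?thesis
        using v_min unfolding reach_def by blast
    qed
    ultimately have "\<exists>C \<sigma>. C \<noteq> {} \<and> balanced_in_closed E C \<sigma>"
      by (rule balanced_in_closed_if_initial_component[OF sgn nnc])
    then show ?thesis ..
  qed
qed

section \<open>Local monotonicity\<close>

lemma signed_interaction_digraph: "signed_digraph (interaction_digraph f)"
  unfolding signed_digraph_def interaction_digraph_def by auto

lemma in_arc_if_coordinate_matters:
  assumes "f (x(u := b)) i \<noteq> f x i"
  shows "(u, i, if f (x(u := True)) i then 1 else -1) \<in> interaction_digraph f"
proof -
  have "f (x(u := False)) i \<noteq> f (x(u := True)) i"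
    using assms by (cases b; cases "x u") (auto simp: fun_upd_idem)
  then show ?thesis
    unfolding interaction_digraph_def
    by (cases "f (x(u := True)) i") (auto intro!: exI[of _ "x(u := False)"])
qed

lemma nonconstant_if_arc: "(j, i, s) \<in> interaction_digraph f \<Longrightarrow> \<exists>x. f x i \<noteq> f (x(j := True)) i"
  unfolding interaction_digraph_def by auto

lemma coordinatewise_induct:
  fixes x y :: "'a::finite \<Rightarrow> 'b"
  assumes "P x" and "\<And>z u. P z \<Longrightarrow> z u = x u \<Longrightarrow> P (z(u := y u))"
  shows "P y"
proof -
  have "P (override_on x y D)" if "finite D" for D
    using that
  proof (induction D rule: finite_induct)
    case (insert u D)
    then show ?case
      unfolding override_on_insert by (intro assms(2)) simp_all
  qed (simp add: assms(1))
  from this[of UNIV] show ?thesis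
    by (simp add: override_on_def)
qed

lemma eq_if_agree_on_in_neighbours:
  fixes f :: "('v::finite \<Rightarrow> bool) \<Rightarrow> ('v \<Rightarrow> bool)"
  assumes "\<And>j s. (j, i, s) \<in> interaction_digraph f \<Longrightarrow> x j = y j"
  shows "f x i = f y i"
proof -
  have "f y i = f x i"
  proof (rule coordinatewise_induct[where P = "\<lambda>z. f z i = f x i" and x = x and y = y])
    fix z u
    assume "f z i = f x i" "z u = x u"
    show "f (z(u := y u)) i = f x i"
    proof (cases "f (z(u := y u)) i = f z i")
      case False
      then have "x u = y u"
        by (intro assms) (rule in_arc_if_coordinate_matters)
      with \<open>z u = x u\<close> False show ?thesis
        by (simp add: fun_upd_idem)
    qed (use \<open>f z i = f x i\<close> in simp)
  qed simp
  then show ?thesis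
    by simp
qed

definition influential :: "(('v \<Rightarrow> bool) \<Rightarrow> ('v \<Rightarrow> bool)) \<Rightarrow> 'v set" where
  "influential f = {j. \<exists>i s. (j, i, s) \<in> interaction_digraph f}"

lemma constant_if_no_influential:
  fixes f :: "('v::finite \<Rightarrow> bool) \<Rightarrow> ('v \<Rightarrow> bool)"
  assumes "influential f = {}"
  shows "f x = f y"
proof
  fix i
  have "j \<notin> influential f" for j
    using assms by simp
  then have no_arc: "(j, i, s) \<notin> interaction_digraph f" for j s
    unfolding influential_def by simp
  show "f x i = f y i"
    by (rule eq_if_agree_on_in_neighbours[where f = f]) (simp add: no_arc)
qed

lemma disagreement_fun_upd:
  assumes balanced: "\<And>j s. (j, i, s) \<in> interaction_digraph f \<Longrightarrow> s = 1 \<longleftrightarrow> (\<sigma> j \<longleftrightarrow> \<sigma> i)"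
    and agree: "z u = \<sigma> u" and disagree: "f z i \<noteq> \<sigma> i"
  shows "f (z(u := c)) i \<noteq> \<sigma> i"
proof
  assume flipped: "f (z(u := c)) i = \<sigma> i"
  with disagree have arc: "(u, i, if f (z(u := True)) i then 1 else -1) \<in> interaction_digraph f"
    by (intro in_arc_if_coordinate_matters) simp
  have "f (z(u := True)) i \<longleftrightarrow> (\<sigma> u \<longleftrightarrow> \<sigma> i)"
    using balanced[OF arc] by (simp split: if_split_asm)
  moreover have "c \<noteq> \<sigma> u"
  proof
    assume "c = \<sigma> u"
    with agree have "z(u := c) = z"
      by (simp add: fun_upd_idem)
    with disagree flipped show False
      by simp
  qed
  then have "f (z(u := True)) i = (if \<sigma> u then f z i else \<sigma> i)"
    using agree flipped by (cases "\<sigma> u"; cases c) (simp_all add: fun_upd_idem)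
  ultimately show False
    using disagree by (cases "\<sigma> u") simp_all
qed

lemma disagreement_mono:
  fixes f :: "('v::finite \<Rightarrow> bool) \<Rightarrow> ('v \<Rightarrow> bool)"
  assumes balanced: "\<And>j s. (j, i, s) \<in> interaction_digraph f \<Longrightarrow> s = 1 \<longleftrightarrow> (\<sigma> j \<longleftrightarrow> \<sigma> i)"
    and away: "\<And>u. x u \<noteq> \<sigma> u \<Longrightarrow> y u \<noteq> \<sigma> u"
    and "f x i \<noteq> \<sigma> i"
  shows "f y i \<noteq> \<sigma> i"
proof (rule coordinatewise_induct[where P = "\<lambda>z. f z i \<noteq> \<sigma> i" and x = x and y = y])
  fix z u
  assume z: "f z i \<noteq> \<sigma> i" "z u = x u"
  show "f (z(u := y u)) i \<noteq> \<sigma> i"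
  proof (cases "x u = \<sigma> u")
    case True
    with z(2) have "z u = \<sigma> u"
      by simp
    from balanced this z(1) show ?thesis
      by (rule disagreement_fun_upd[where f = f and i = i and \<sigma> = \<sigma>])
  next
    case False
    with away[OF False] z(2) have "y u = z u"
      by (cases "x u") simp_all
    with z(1) show ?thesis
      by (simp add: fun_upd_idem)
  qed
qed (use assms in simp)

lemma disagreement_on_balanced_in_closed:
  fixes f :: "('v::finite \<Rightarrow> bool) \<Rightarrow> ('v \<Rightarrow> bool)"
  assumes "balanced_in_closed (interaction_digraph f) C \<sigma>" and "i \<in> C"
    and x: "\<forall>u\<in>C. x u = \<sigma> u" and "f x i \<noteq> \<sigma> i"
  shows "f y i \<noteq> \<sigma> i"
proof -
  have arcs_into_i: "\<forall>j s. (j, i, s) \<in> interaction_digraph f \<longrightarrow>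
      j \<in> C \<and> (s = 1 \<longleftrightarrow> (\<sigma> j \<longleftrightarrow> \<sigma> i))"
    using assms(1,2) unfolding balanced_in_closed_def by simp
  note in_closed = arcs_into_i[rule_format, THEN conjunct1]
  note balanced = arcs_into_i[rule_format, THEN conjunct2]
  have "f (override_on y \<sigma> C) i = f x i"
    by (rule eq_if_agree_on_in_neighbours[where f = f]) (simp add: x in_closed)
  show ?thesis
  proof (rule disagreement_mono[where f = f and \<sigma> = \<sigma> and x = "override_on y \<sigma> C"])
    show "\<And>j s. (j, i, s) \<in> interaction_digraph f \<Longrightarrow> s = 1 \<longleftrightarrow> (\<sigma> j \<longleftrightarrow> \<sigma> i)"
      by (rule balanced)
    show "\<And>u. override_on y \<sigma> C u \<noteq> \<sigma> u \<Longrightarrow> y u \<noteq> \<sigma> u"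
      by (simp add: override_on_def split: if_splits)
    show "f (override_on y \<sigma> C) i \<noteq> \<sigma> i"
      using \<open>f (override_on y \<sigma> C) i = f x i\<close> \<open>f x i \<noteq> \<sigma> i\<close> by simp
  qed
qed

definition stable_on :: "(('v \<Rightarrow> bool) \<Rightarrow> ('v \<Rightarrow> bool)) \<Rightarrow> 'v set \<Rightarrow> ('v \<Rightarrow> bool) \<Rightarrow> bool" where
  "stable_on f C \<sigma> \<longleftrightarrow> (\<forall>x. (\<forall>u\<in>C. x u = \<sigma> u) \<longrightarrow> (\<forall>u\<in>C. f x u = \<sigma> u))"

lemma stable_on_if_balanced_in_closed:
  fixes f :: "('v::finite \<Rightarrow> bool) \<Rightarrow> ('v \<Rightarrow> bool)"
  assumes "balanced_in_closed (interaction_digraph f) C \<sigma>"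
  shows "stable_on f C \<sigma>"
  unfolding stable_on_def
proof (intro allI impI ballI)
  fix x i
  assume x: "\<forall>u\<in>C. x u = \<sigma> u" and "i \<in> C"
  with assms have "\<exists>j s. (j, i, s) \<in> interaction_digraph f"
    unfolding balanced_in_closed_def by simp
  then obtain j s where "(j, i, s) \<in> interaction_digraph f"
    by blast
  then have "\<exists>z. f z i \<noteq> f (z(j := True)) i"
    by (rule nonconstant_if_arc)
  then obtain z where nonconstant: "f z i \<noteq> f (z(j := True)) i" ..
  show "f x i = \<sigma> i"
  proof (rule ccontr)
    assume "f x i \<noteq> \<sigma> i"
    with assms \<open>i \<in> C\<close> x have away: "f y i \<noteq> \<sigma> i" for y
      by (rule disagreement_on_balanced_in_closed)
    from nonconstant show False
      using away[of z] away[of "z(j := True)"] by auto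
  qed
qed

lemma stable_on_constant: "\<forall>x. f x i = b \<Longrightarrow> stable_on f {i} (\<lambda>_. b)"
  unfolding stable_on_def by simp

section \<open>Clamping and fixed points\<close>

definition clamp :: "(('v \<Rightarrow> bool) \<Rightarrow> ('v \<Rightarrow> bool)) \<Rightarrow> 'v set \<Rightarrow> ('v \<Rightarrow> bool) \<Rightarrow> ('v \<Rightarrow> bool) \<Rightarrow> ('v \<Rightarrow> bool)" where
  "clamp f C \<sigma> x = f (override_on x \<sigma> C)"

lemma interaction_digraph_clamp:
  assumes "(j, i, s) \<in> interaction_digraph (clamp f C \<sigma>)"
  shows "j \<notin> C \<and> (j, i, s) \<in> interaction_digraph f"
proof -
  have upd: "override_on (x(j := b)) \<sigma> C = (if j \<in> C then override_on x \<sigma> C else (override_on x \<sigma> C)(j := b))"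
    for x b by (auto simp: override_on_def fun_eq_iff)
  obtain x where "\<not> x j" "clamp f C \<sigma> x i \<noteq> clamp f C \<sigma> (x(j := True)) i"
    "s = (if clamp f C \<sigma> (x(j := True)) i then 1 else -1)"
    using assms unfolding interaction_digraph_def by auto
  then show ?thesis
    unfolding interaction_digraph_def clamp_def upd
    by (cases "j \<in> C") (auto intro!: exI[of _ "override_on x \<sigma> C"])
qed

lemma no_negative_cycle_subset: "E' \<subseteq> E \<Longrightarrow> no_negative_cycle E \<Longrightarrow> no_negative_cycle E'"
  unfolding no_negative_cycle_def is_cycle_def by blast

lemma no_negative_cycle_clamp:
  "no_negative_cycle (interaction_digraph f) \<Longrightarrow> no_negative_cycle (interaction_digraph (clamp f C \<sigma>))"
  by (rule no_negative_cycle_subset[of _ "interaction_digraph f"]) (auto dest: interaction_digraph_clamp)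

lemma card_influential_clamp_less:
  fixes f :: "('v::finite \<Rightarrow> bool) \<Rightarrow> ('v \<Rightarrow> bool)"
  assumes "C \<inter> influential f \<noteq> {}"
  shows "card (influential (clamp f C \<sigma>)) < card (influential f)"
proof -
  have "influential (clamp f C \<sigma>) \<subseteq> influential f - C"
    unfolding influential_def using interaction_digraph_clamp by fast
  with assms show ?thesis
    by (intro psubset_card_mono) auto
qed

lemma clamp_eq:
  assumes "\<forall>u\<in>C. x u = \<sigma> u"
  shows "clamp f C \<sigma> x = f x"
proof -
  have "override_on x \<sigma> C = x"
    using assms by (auto simp: override_on_def)
  then show ?thesis
    by (simp add: clamp_def)
qed

lemma clamp_apply_in: "stable_on f C \<sigma> \<Longrightarrow> u \<in> C \<Longrightarrow> clamp f C \<sigma> x u = \<sigma> u"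
  unfolding stable_on_def clamp_def by simp

lemma fixed_point_if_fixed_point_clamp:
  assumes "stable_on f C \<sigma>" "clamp f C \<sigma> x = x"
  shows "f x = x"
proof -
  have "\<forall>u\<in>C. x u = \<sigma> u"
    using assms(2) clamp_apply_in[OF assms(1), of _ x] by auto
  then show ?thesis
    using clamp_eq[of C x \<sigma> f] assms(2) by simp
qed

lemma constant_influential_or_stable_pair:
  fixes f :: "('v::finite \<Rightarrow> bool) \<Rightarrow> ('v \<Rightarrow> bool)"
  assumes nnc: "no_negative_cycle (interaction_digraph f)" and "influential f \<noteq> {}"
  shows "(\<exists>i\<in>influential f. \<exists>b. \<forall>x. f x i = b)
    \<or> (\<exists>C \<sigma>. C \<inter> influential f \<noteq> {} \<and> stable_on f C \<sigma> \<and> stable_on f C (\<lambda>u. \<not> \<sigma> u))"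
proof -
  obtain j where "j \<in> influential f"
    using assms(2) by blast
  then have "interaction_digraph f \<noteq> {}"
    unfolding influential_def by blast
  with source_or_balanced_in_closed[OF signed_interaction_digraph nnc]
  consider (source) i where "\<exists>j s. (i, j, s) \<in> interaction_digraph f"
      "\<forall>j s. (j, i, s) \<notin> interaction_digraph f"
    | (balanced) C \<sigma> where "C \<noteq> {}" "balanced_in_closed (interaction_digraph f) C \<sigma>"
    by blast
  then show ?thesis
  proof cases
    case source
    then have "i \<in> influential f"
      unfolding influential_def by simp
    moreover have "\<forall>x. f x i = f undefined i"
    proof
      fix x
      show "f x i = f undefined i"
        by (rule eq_if_agree_on_in_neighbours[where f = f]) (simp add: source(2))
    qed
    ultimately show ?thesis
      by blast
  next
    case balanced
    then obtain i where "i \<in> C"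
      by blast
    with balanced(2) have "\<exists>j s. (j, i, s) \<in> interaction_digraph f \<and> j \<in> C"
      unfolding balanced_in_closed_def by blast
    then have "C \<inter> influential f \<noteq> {}"
      unfolding influential_def by blast
    moreover have "stable_on f C \<sigma>"
      using balanced(2) by (rule stable_on_if_balanced_in_closed)
    moreover have "balanced_in_closed (interaction_digraph f) C (\<lambda>u. \<not> \<sigma> u)"
      using balanced(2) unfolding balanced_in_closed_def by simp
    then have "stable_on f C (\<lambda>u. \<not> \<sigma> u)"
      by (rule stable_on_if_balanced_in_closed)
    ultimately show ?thesis
      by blast
  qed
qed

lemma fixed_point_exists:
  fixes f :: "('v::finite \<Rightarrow> bool) \<Rightarrow> ('v \<Rightarrow> bool)"
  assumes "no_negative_cycle (interaction_digraph f)"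
  shows "\<exists>x. f x = x"
  using assms
proof (induction "card (influential f)" arbitrary: f rule: less_induct)
  case less
  show ?case
  proof (cases "influential f = {}")
    case True
    then have "f (f x) = f x" for x
      by (rule constant_if_no_influential)
    then show ?thesis
      by blast
  next
    case False
    from constant_influential_or_stable_pair[OF less.prems False]
    obtain C \<sigma> where meets: "C \<inter> influential f \<noteq> {}" and stable: "stable_on f C \<sigma>"
    proof (elim disjE)
      assume "\<exists>i\<in>influential f. \<exists>b. \<forall>x. f x i = b"
      then obtain i b where "i \<in> influential f" "\<forall>x. f x i = b"
        by blast
      moreover from \<open>\<forall>x. f x i = b\<close> have "stable_on f {i} (\<lambda>_. b)"
        by (rule stable_on_constant)
      ultimately show thesis
        by (intro that[of "{i}"]) auto
    qed blast
    from meets have "card (influential (clamp f C \<sigma>)) < card (influential f)"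
      by (rule card_influential_clamp_less)
    moreover have "no_negative_cycle (interaction_digraph (clamp f C \<sigma>))"
      using less.prems by (rule no_negative_cycle_clamp)
    ultimately have "\<exists>x. clamp f C \<sigma> x = x"
      by (rule less.hyps)
    then show ?thesis
      using fixed_point_if_fixed_point_clamp[OF stable] by blast
  qed
qed

lemma constant_influential_if_unique_fixed_point:
  fixes f :: "('v::finite \<Rightarrow> bool) \<Rightarrow> ('v \<Rightarrow> bool)"
  assumes nnc: "no_negative_cycle (interaction_digraph f)"
    and "influential f \<noteq> {}" and unique: "\<exists>!x. f x = x"
  shows "\<exists>i\<in>influential f. \<exists>b. \<forall>x. f x i = b"
  using constant_influential_or_stable_pair[OF nnc assms(2)]
proof (elim disjE)
  assume "\<exists>C \<sigma>. C \<inter> influential f \<noteq> {} \<and> stable_on f C \<sigma> \<and> stable_on f C (\<lambda>u. \<not> \<sigma> u)"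
  then obtain C \<sigma> c where "c \<in> C"
    and stable: "stable_on f C \<sigma>" and stable': "stable_on f C (\<lambda>u. \<not> \<sigma> u)"
    by blast
  obtain x where x: "clamp f C \<sigma> x = x"
    using fixed_point_exists[OF no_negative_cycle_clamp[OF nnc]] by blast
  obtain x' where x': "clamp f C (\<lambda>u. \<not> \<sigma> u) x' = x'"
    using fixed_point_exists[OF no_negative_cycle_clamp[OF nnc]] by blast
  have "x = x'"
    using unique fixed_point_if_fixed_point_clamp[OF stable x]
      fixed_point_if_fixed_point_clamp[OF stable' x'] by blast
  moreover have "x c = \<sigma> c" "x' c = (\<not> \<sigma> c)"
    using clamp_apply_in[OF stable \<open>c \<in> C\<close>, of x] clamp_apply_in[OF stable' \<open>c \<in> C\<close>, of x'] x x'
    by simp_all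
  ultimately show ?thesis
    by simp
qed

section \<open>Synchronizing words\<close>

lemma word_update_Nil [simp]: "word_update f [] x = x"
  by (simp add: word_update_def)

lemma word_update_Cons [simp]: "word_update f (j # w) x = word_update f w (async_update f j x)"
  by (simp add: word_update_def)

lemma word_update_append: "word_update f (w @ w') x = word_update f w' (word_update f w x)"
  by (simp add: word_update_def)

lemma word_update_fixed_point: "f x = x \<Longrightarrow> word_update f w x = x"
  by (induction w) (simp_all add: async_update_def)

lemma word_update_apply_constant:
  assumes "\<forall>y. f y u = b" "u \<in> set w"
  shows "word_update f w x u = b"
  using assms(2)
proof (induction w rule: rev_induct)
  case (snoc j w)
  then show ?case
    using assms(1) by (cases "j = u") (simp_all add: word_update_append async_update_def)
qed simp

lemma word_update_cong_invariant:
  assumes "\<forall>y. f y i = b" and "\<And>y. y i = b \<Longrightarrow> g y = f y" and "y i = b"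
  shows "word_update f w y = word_update g w y"
  using assms(3)
proof (induction w arbitrary: y)
  case (Cons j w)
  have "async_update g j y = async_update f j y"
    using Cons.prems assms(2) by (simp add: async_update_def)
  moreover have "async_update f j y i = b"
    using Cons.prems assms(1) by (cases "j = i") (simp_all add: async_update_def)
  ultimately show ?case
    using Cons.IH by simp
qed simp

lemma word_update_removeAll:
  assumes "\<forall>y. f y i = b" and "y i = b"
  shows "word_update f (removeAll i w) y = word_update f w y"
  using assms(2)
proof (induction w arbitrary: y)
  case (Cons j w)
  show ?case
  proof (cases "j = i")
    case True
    with Cons.prems assms(1) have "async_update f j y = y"
      by (simp add: async_update_def fun_upd_idem)
    with True Cons show ?thesis
      by simp
  next
    case False
    with Cons.prems have "async_update f j y i = b"
      by (simp add: async_update_def)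
    with False Cons.IH show ?thesis
      by simp
  qed
qed simp

lemma synchronizing_word_if_constant:
  assumes "\<And>x y. f x = f y" and "set w = UNIV"
  shows "synchronizing_word f w"
proof -
  have "word_update f w x = f undefined" for x
  proof
    fix u
    have "\<forall>y. f y u = f undefined u"
    proof
      fix y
      show "f y u = f undefined u"
        using assms(1)[of y undefined] by simp
    qed
    then show "word_update f w x u = f undefined u"
      by (rule word_update_apply_constant) (simp add: assms(2))
  qed
  then show ?thesis
    unfolding synchronizing_word_def by blast
qed

lemma fixed_point_clamp_constant_iff:
  assumes const: "\<forall>x. f x i = b"
  shows "clamp f {i} (\<lambda>_. b) x = x \<longleftrightarrow> f x = x"
proof
  from const have "stable_on f {i} (\<lambda>_. b)"
    by (rule stable_on_constant)
  then show "f x = x" if "clamp f {i} (\<lambda>_. b) x = x"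
    using that by (rule fixed_point_if_fixed_point_clamp)
next
  assume "f x = x"
  then have "x i = b"
    using const by metis
  with \<open>f x = x\<close> show "clamp f {i} (\<lambda>_. b) x = x"
    by (simp add: clamp_eq)
qed

lemma synchronizing_word_Cons_removeAll:
  assumes const: "\<forall>x. f x i = b" and "synchronizing_word (clamp f {i} (\<lambda>_. b)) w"
  shows "synchronizing_word f (i # removeAll i w)"
proof -
  obtain c where sync: "\<And>x. word_update (clamp f {i} (\<lambda>_. b)) w x = c"
    using assms(2) unfolding synchronizing_word_def by blast
  have "word_update f (i # removeAll i w) x = c" for x
  proof -
    define y where "y = async_update f i x"
    have "y i = b"
      unfolding y_def async_update_def using const by simp
    have "word_update f (i # removeAll i w) x = word_update f (removeAll i w) y"
      unfolding y_def by simp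
    also have "\<dots> = word_update f w y"
      using const \<open>y i = b\<close> by (rule word_update_removeAll)
    also have "\<dots> = word_update (clamp f {i} (\<lambda>_. b)) w y"
      using const _ \<open>y i = b\<close> by (rule word_update_cong_invariant) (simp add: clamp_eq)
    also have "\<dots> = c"
      by (rule sync)
    finally show ?thesis .
  qed
  then show ?thesis
    unfolding synchronizing_word_def by blast
qed

lemma distinct_synchronizing_word_if_unique_fixed_point:
  fixes f :: "('v::finite \<Rightarrow> bool) \<Rightarrow> ('v \<Rightarrow> bool)"
  assumes "no_negative_cycle (interaction_digraph f)" and "\<exists>!x. f x = x"
  shows "\<exists>w. distinct w \<and> synchronizing_word f w"
  using assms
proof (induction "card (influential f)" arbitrary: f rule: less_induct)
  case less
  show ?case
  proof (cases "influential f = {}")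
    case True
    obtain w :: "'v list" where "set w = UNIV" "distinct w"
      using finite_distinct_list[OF finite_UNIV] by blast
    with constant_if_no_influential[OF True] show ?thesis
      using synchronizing_word_if_constant by blast
  next
    case False
    obtain i b where "i \<in> influential f" and const: "\<forall>x. f x i = b"
      using constant_influential_if_unique_fixed_point[OF less.prems(1) False less.prems(2)] by blast
    have "card (influential (clamp f {i} (\<lambda>_. b))) < card (influential f)"
      by (rule card_influential_clamp_less) (use \<open>i \<in> influential f\<close> in blast)
    moreover have "no_negative_cycle (interaction_digraph (clamp f {i} (\<lambda>_. b)))"
      using less.prems(1) by (rule no_negative_cycle_clamp)
    moreover have "\<exists>!x. clamp f {i} (\<lambda>_. b) x = x"
      using less.prems(2) by (simp add: fixed_point_clamp_constant_iff[where f = f, OF const])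
    ultimately have "\<exists>w. distinct w \<and> synchronizing_word (clamp f {i} (\<lambda>_. b)) w"
      by (rule less.hyps)
    then obtain w where "distinct w" and sync: "synchronizing_word (clamp f {i} (\<lambda>_. b)) w"
      by blast
    have "distinct (i # removeAll i w)"
      using \<open>distinct w\<close> by (simp add: distinct_removeAll)
    moreover have "synchronizing_word f (i # removeAll i w)"
      using const sync by (rule synchronizing_word_Cons_removeAll)
    ultimately show ?thesis
      by blast
  qed
qed

lemma synchronizing_word_append:
  assumes "synchronizing_word f w"
  shows "synchronizing_word f (w @ w')"
proof -
  obtain c where "\<And>x. word_update f w x = c"
    using assms unfolding synchronizing_word_def by blast
  then have "\<And>x. word_update f (w @ w') x = word_update f w' c"
    by (simp add: word_update_append)
  then show ?thesis
    unfolding synchronizing_word_def by blast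
qed

lemma unique_fixed_point_if_synchronizing:
  fixes f :: "('v::finite \<Rightarrow> bool) \<Rightarrow> ('v \<Rightarrow> bool)"
  assumes "no_negative_cycle (interaction_digraph f)" and "synchronizing f"
  shows "\<exists>!x. f x = x"
proof -
  obtain w c where sync: "\<And>x. word_update f w x = c"
    using assms(2) unfolding synchronizing_def synchronizing_word_def by blast
  have "x = c" if "f x = x" for x
    using sync[of x] word_update_fixed_point[where f = f and w = w, OF that] by simp
  moreover obtain x where "f x = x"
    using fixed_point_exists[OF assms(1)] by blast
  ultimately show ?thesis
    by blast
qed

theorem proposition8:
  fixes G :: "('v::finite) sdigraph"
    and f :: "('v \<Rightarrow> bool) \<Rightarrow> ('v \<Rightarrow> bool)"
    and n :: nat
  assumes "signed_digraph G"
    and "n = card (UNIV :: 'v set)"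
    and "no_negative_cycle G"
    and "interaction_digraph f = G"
  shows "((\<exists>!x. f x = x) \<longleftrightarrow> (\<exists>w. length w = n \<and> synchronizing_word f w))
       \<and> ((\<exists>w. length w = n \<and> synchronizing_word f w) \<longleftrightarrow> synchronizing f)"
proof -
  have nnc: "no_negative_cycle (interaction_digraph f)"
    using assms(3,4) by simp
  have sync_of_length_n: "\<exists>w. length w = n \<and> synchronizing_word f w" if unique: "\<exists>!x. f x = x"
  proof -
    obtain w where "distinct w" "synchronizing_word f w"
      using distinct_synchronizing_word_if_unique_fixed_point[OF nnc unique] by blast
    have "length w \<le> n"
      using \<open>distinct w\<close> assms(2) by (metis card_mono distinct_card finite subset_UNIV)
    then have "length (w @ replicate (n - length w) undefined) = n"
      by simp
    with synchronizing_word_append[OF \<open>synchronizing_word f w\<close>] show ?thesis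
      by blast
  qed
  show ?thesis
    using sync_of_length_n unique_fixed_point_if_synchronizing[OF nnc]
    unfolding synchronizing_def by blast
qed

end
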